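(* Let $S\subseteq\mathbb{R}^{n_1}\times\dots\times\mathbb{R}^{n_m}\times\mathbb{R}^p$, with elements written $(x^1,\dots,x^m,z)$. (1) If $S$ is permutation-invariant with respect to $x^k$ for every $k=1,\dots,m$, then $\mathrm{conv}(S)=\{(x^1,\dots,x^m,z)\mid \exists u^1,\dots,u^m:\ (u^1,\dots,u^m,z)\in\mathrm{conv}(S_0),\ u^k\ge_m x^k,\ k=1,\dots,m\}$, where $S_0=S\cap(\Delta^{n_1}\times\dots\times\Delta^{n_m}\times\mathbb{R}^p)$. (2) If $S$ is sign-invariant with respect to $x^k$ for every $k$, then $\mathrm{conv}(S)=\{(x^1,\dots,x^m,z)\mid \exists u^1,\dots,u^m:\ (u^1,\dots,u^m,z)\in\mathrm{conv}(S_0),\ u^k\ge|x^k|,\ k=1,\dots,m\}$, where $S_0=S\cap(\mathbb{R}^{n_1}_+\times\dots\times\mathbb{R}^{n_m}_+\times\mathbb{R}^p)$. (3) If $S$ is both permutation-invariant and sign-invariant with respect to $x^k$ for every $k$, then $\mathrm{conv}(S)=\{(x^1,\dots,x^m,z)\mid \exists u^1,\dots,u^m:\ (u^1,\dots,u^m,z)\in\mathrm{conv}(S_0),\ u^k\ge_{wm}|x^k|,\ k=1,\dots,m\}$, where $S_0=S\cap\{(u^1,\dots,u^m,z)\mid u^k_1\ge\dots\ge u^k_{n_k}\ge 0,\ k=1,\dots,m\}$.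
   Context: $\Delta^n=\{x\in\mathbb{R}^n\mid x_1\ge\dots\ge x_n\}$. $S$ is permutation-invariant with respect to $x^k$ if replacing $x^k$ by $Px^k$, for any $n_k\times n_k$ permutation matrix $P$, keeps the point in $S$; it is sign-invariant with respect to $x^k$ if replacing $x^k$ by any $\bar x^k$ with $|\bar x^k|=|x^k|$ (componentwise absolute value) keeps the point in $S$. For $x\in\mathbb{R}^n$, $x_{[i]}$ is the $i$-th largest component. $x\ge_m y$ means $\sum_{i=1}^j x_{[i]}\ge\sum_{i=1}^j y_{[i]}$ for $j<n$ with equality for $j=n$; $x\ge_{wm}y$ means $\sum_{i=1}^j x_{[i]}\ge\sum_{i=1}^j y_{[i]}$ for all $j=1,\dots,n$. Inequalities between vectors are componentwise. *)

theory Defs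
  imports "HOL-Analysis.Analysis" "HOL-Library.Function_Algebras"
begin

instantiation "fun" :: (type, scaleR) scaleR
begin
definition scaleR_fun :: "real \<Rightarrow> ('a \<Rightarrow> 'b) \<Rightarrow> 'a \<Rightarrow> 'b"
  where "scaleR_fun r f = (\<lambda>x. r *\<^sub>R f x)"
instance ..
end

instance "fun" :: (type, real_vector) real_vector
  by standard (auto simp: scaleR_fun_def fun_eq_iff scaleR_add_right scaleR_add_left)

text \<open>A point (x^1,...,x^m,z) is represented as a pair (x, z) with
  x :: nat => nat => real (x k i is the (i+1)-th component of x^(k+1), 0-based)
  and z :: nat => real.\<close>

definition vecs :: "nat \<Rightarrow> (nat \<Rightarrow> real) set" where
  "vecs d = {v. \<forall>i\<ge>d. v i = 0}"

definition space :: "nat \<Rightarrow> (nat \<Rightarrow> nat) \<Rightarrow> nat \<Rightarrow> ((nat \<Rightarrow> nat \<Rightarrow> real) \<times> (nat \<Rightarrow> real)) set" where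
  "space m n p = {(x, z). (\<forall>k<m. x k \<in> vecs (n k)) \<and> (\<forall>k\<ge>m. x k = (\<lambda>_. 0)) \<and> z \<in> vecs p}"

definition perm_invariant ::
  "((nat \<Rightarrow> nat \<Rightarrow> real) \<times> (nat \<Rightarrow> real)) set \<Rightarrow> (nat \<Rightarrow> nat) \<Rightarrow> nat \<Rightarrow> bool" where
  "perm_invariant S n k \<longleftrightarrow>
     (\<forall>x z \<sigma>. (x, z) \<in> S \<longrightarrow> \<sigma> permutes {..<n k} \<longrightarrow> (x(k := x k \<circ> \<sigma>), z) \<in> S)"

definition sign_invariant ::
  "((nat \<Rightarrow> nat \<Rightarrow> real) \<times> (nat \<Rightarrow> real)) set \<Rightarrow> (nat \<Rightarrow> nat) \<Rightarrow> nat \<Rightarrow> bool" where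
  "sign_invariant S n k \<longleftrightarrow>
     (\<forall>x z y. (x, z) \<in> S \<longrightarrow> y \<in> vecs (n k) \<longrightarrow> (\<forall>i<n k. \<bar>y i\<bar> = \<bar>x k i\<bar>)
        \<longrightarrow> (x(k := y), z) \<in> S)"

text \<open>Components of a vector of length d sorted in nonincreasing order;
  (decr d x) ! (i-1) is x_[i].\<close>
definition decr :: "nat \<Rightarrow> (nat \<Rightarrow> real) \<Rightarrow> real list" where
  "decr d x = rev (sort (map x [0..<d]))"

definition majorizes :: "nat \<Rightarrow> (nat \<Rightarrow> real) \<Rightarrow> (nat \<Rightarrow> real) \<Rightarrow> bool" where
  "majorizes d x y \<longleftrightarrow>
     (\<forall>j<d. sum_list (take j (decr d x)) \<ge> sum_list (take j (decr d y))) \<and>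
     sum_list (decr d x) = sum_list (decr d y)"

definition weakly_majorizes :: "nat \<Rightarrow> (nat \<Rightarrow> real) \<Rightarrow> (nat \<Rightarrow> real) \<Rightarrow> bool" where
  "weakly_majorizes d x y \<longleftrightarrow>
     (\<forall>j\<in>{1..d}. sum_list (take j (decr d x)) \<ge> sum_list (take j (decr d y)))"

definition nonincreasing :: "nat \<Rightarrow> (nat \<Rightarrow> real) \<Rightarrow> bool" where
  "nonincreasing d v \<longleftrightarrow> (\<forall>i j. i \<le> j \<longrightarrow> j < d \<longrightarrow> v j \<le> v i)"

end

theory Submission
  imports Defs
begin

text \<open>
  Both inclusions are proved one block at a time. For the inclusion of conv S in the right-hand
  side, write a point of conv S as a convex combination of points of S and normalise every block
  of every point (sort it, take absolute values, or both). By invariance the normalised points stay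
  in S, their combination is the witness u, and the majorization holds because the sum of the j
  largest entries of a vector is a sublinear function of the vector. Conversely, the slice of
  conv S through one block is convex and inherits the invariances; a vector majorized by an
  element of the slice is reached from it by finitely many Robin Hood transfers (convex
  combinations with a copy in which two coordinates are swapped) and, for weak majorization, by
  shrinking single coordinates (convex combinations with a copy in which one sign is flipped).
\<close>

definition top_sum :: "nat \<Rightarrow> (nat \<Rightarrow> real) \<Rightarrow> nat \<Rightarrow> real" where
  "top_sum d x j = sum_list (take j (decr d x))"

definition sort_perm :: "nat \<Rightarrow> (nat \<Rightarrow> real) \<Rightarrow> nat \<Rightarrow> nat" where
  "sort_perm d x = (SOME p. p permutes {..<d} \<and> nonincreasing d (x \<circ> p))"

lemma decr_permute:
  assumes "p permutes {..<d}"
  shows "decr d (x \<circ> p) = decr d x"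
proof -
  have "map (x \<circ> p) [0..<d] = permute_list p (map x [0..<d])"
    using permutes_in_image[OF assms] by (auto simp: permute_list_def intro!: map_cong)
  then have "mset (map (x \<circ> p) [0..<d]) = mset (map x [0..<d])"
    using assms by simp
  then show ?thesis
    unfolding decr_def by (metis sorted_list_of_multiset_mset)
qed

lemma decr_nonincreasing:
  assumes "nonincreasing d x"
  shows "decr d x = map x [0..<d]"
proof -
  have "sort (map x [0..<d]) = rev (map x [0..<d])"
  proof (rule properties_for_sort)
    show "sorted (rev (map x [0..<d]))"
      unfolding sorted_wrt_rev using assms by (auto simp: sorted_wrt_iff_nth_less nonincreasing_def)
  qed simp
  then show ?thesis
    by (simp add: decr_def)
qed

lemma sorting_permutation_exists:
  obtains p where "p permutes {..<d}" "nonincreasing d (x \<circ> p)"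
proof -
  have "mset (decr d x) = mset (map x [0..<d])"
    by (simp add: decr_def)
  then obtain p where p: "p permutes {..<d}" "permute_list p (map x [0..<d]) = decr d x"
    by (metis diff_zero length_map length_upt mset_eq_permutation)
  have "decr d x = map (x \<circ> p) [0..<d]"
    using p(2)[symmetric] permutes_in_image[OF p(1)]
    by (auto simp: permute_list_def intro!: map_cong)
  moreover have "sorted_wrt (\<ge>) (decr d x)"
    by (simp add: decr_def sorted_wrt_rev)
  ultimately have "nonincreasing d (x \<circ> p)"
    by (auto simp: nonincreasing_def sorted_wrt_iff_nth_less le_less)
  with p(1) show thesis
    by (rule that)
qed

lemma sort_perm:
  shows sort_perm_permutes: "sort_perm d x permutes {..<d}"
    and nonincreasing_sort_perm: "nonincreasing d (x \<circ> sort_perm d x)"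
proof -
  have "\<exists>p. p permutes {..<d} \<and> nonincreasing d (x \<circ> p)"
    by (metis sorting_permutation_exists)
  then have "sort_perm d x permutes {..<d} \<and> nonincreasing d (x \<circ> sort_perm d x)"
    unfolding sort_perm_def by (rule someI_ex)
  then show "sort_perm d x permutes {..<d}" "nonincreasing d (x \<circ> sort_perm d x)"
    by auto
qed

lemma top_sum_nonincreasing:
  assumes "nonincreasing d x" "j \<le> d"
  shows "top_sum d x j = (\<Sum>i<j. x i)"
  using assms by (simp add: top_sum_def decr_nonincreasing take_map sum_list_sum_nth lessThan_atLeast0)

lemma top_sum_permute:
  assumes "p permutes {..<d}"
  shows "top_sum d (x \<circ> p) j = top_sum d x j"
  unfolding top_sum_def decr_permute[OF assms] ..

lemma top_sum_sort_perm:
  assumes "j \<le> d"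
  shows "top_sum d x j = (\<Sum>i<j. x (sort_perm d x i))"
proof -
  have "top_sum d x j = top_sum d (x \<circ> sort_perm d x) j"
    by (simp only: top_sum_permute[OF sort_perm_permutes])
  also have "\<dots> = (\<Sum>i<j. x (sort_perm d x i))"
    using top_sum_nonincreasing[OF nonincreasing_sort_perm assms] by simp
  finally show ?thesis .
qed

lemma top_sum_full: "top_sum d x d = (\<Sum>i<d. x i)"
proof -
  have "top_sum d x d = sum (x \<circ> sort_perm d x) {..<d}"
    using top_sum_sort_perm[of d d x] by (simp add: comp_def)
  also have "\<dots> = (\<Sum>i<d. x i)"
    by (rule sum.permute[OF sort_perm_permutes, symmetric])
  finally show ?thesis .
qed

lemma sum_le_initial_sum:
  assumes v: "nonincreasing d v" and I: "I \<subseteq> {..<d}"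
  shows "sum v I \<le> (\<Sum>i<card I. v i)"
proof -
  define J where "J = {..<card I}"
  have "finite I"
    using I finite_subset by blast
  have "card I \<le> d"
    using I card_mono[of "{..<d}" I] by simp
  have "card (J - I) = card (I - J)"
    using \<open>finite I\<close> by (simp add: card_Diff_subset_Int J_def Int_commute)
  moreover have "sum v (I - J) \<le> of_nat (card (I - J)) * v (card I - 1)"
    by (rule sum_bounded_above) (use I v in \<open>auto simp: J_def nonincreasing_def\<close>)
  moreover have "of_nat (card (J - I)) * v (card I - 1) \<le> sum v (J - I)"
    by (rule sum_bounded_below) (use \<open>card I \<le> d\<close> v in \<open>auto simp: J_def nonincreasing_def\<close>)
  ultimately have "sum v (I - J) \<le> sum v (J - I)"
    by simp
  moreover have "sum v I = sum v (I \<inter> J) + sum v (I - J)"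
    using \<open>finite I\<close> by (rule sum.Int_Diff)
  moreover have "sum v J = sum v (I \<inter> J) + sum v (J - I)"
    unfolding J_def by (subst sum.Int_Diff[of _ _ I]) (auto simp: Int_commute)
  ultimately show ?thesis
    unfolding J_def by linarith
qed

lemma sum_le_top_sum:
  assumes "I \<subseteq> {..<d}"
  shows "sum x I \<le> top_sum d x (card I)"
proof -
  define p where "p = sort_perm d x"
  have p: "p permutes {..<d}" "inv p permutes {..<d}"
    unfolding p_def by (simp_all add: sort_perm_permutes permutes_inv)
  have inj: "inj_on (inv p) I"
    using permutes_inj[OF p(2)] inj_on_subset by blast
  have "sum x I = sum (x \<circ> p) (inv p ` I)"
    by (simp add: sum.reindex[OF inj] permutes_inverses(1)[OF p(1)] comp_def)
  also have "\<dots> \<le> (\<Sum>i<card (inv p ` I). (x \<circ> p) i)"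
    by (rule sum_le_initial_sum[OF nonincreasing_sort_perm[of d x, folded p_def]])
      (use assms permutes_in_image[OF p(2)] in auto)
  also have "\<dots> = top_sum d x (card I)"
    using top_sum_sort_perm[of "card I" d x] card_mono[OF _ assms] card_image[OF inj]
    by (simp add: p_def)
  finally show ?thesis .
qed

lemma top_sum_attained:
  assumes "j \<le> d"
  obtains I where "I \<subseteq> {..<d}" "card I = j" "top_sum d x j = sum x I"
proof
  define p where "p = sort_perm d x"
  have p: "p permutes {..<d}"
    unfolding p_def by (rule sort_perm_permutes)
  have inj: "inj_on p {..<j}"
    using permutes_inj[OF p] inj_on_subset by blast
  have "p i < d" if "i < d" for i
    using permutes_in_image[OF p, of i] that by simp
  then show "p ` {..<j} \<subseteq> {..<d}"
    using assms by auto
  show "card (p ` {..<j}) = j"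
    by (simp add: card_image[OF inj])
  show "top_sum d x j = sum x (p ` {..<j})"
    using top_sum_sort_perm[OF assms, of x] sum.reindex[OF inj, of x] by (simp add: p_def comp_def)
qed

lemma top_sum_mono:
  assumes "\<forall>i<d. x i \<le> y i" "j \<le> d"
  shows "top_sum d x j \<le> top_sum d y j"
proof -
  obtain I where I: "I \<subseteq> {..<d}" "card I = j" "top_sum d x j = sum x I"
    using top_sum_attained[OF assms(2)] .
  have "sum x I \<le> sum y I"
    using assms(1) I(1) by (intro sum_mono) auto
  also have "\<dots> \<le> top_sum d y j"
    using sum_le_top_sum[OF I(1)] I(2) by simp
  finally show ?thesis
    using I(3) by simp
qed

lemma top_sum_convex_comb:
  assumes "\<forall>s\<in>F. 0 \<le> c s" "j \<le> d"
  shows "top_sum d (\<lambda>i. \<Sum>s\<in>F. c s * X s i) j \<le> (\<Sum>s\<in>F. c s * top_sum d (X s) j)"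
proof -
  obtain I where I: "I \<subseteq> {..<d}" "card I = j"
    "top_sum d (\<lambda>i. \<Sum>s\<in>F. c s * X s i) j = (\<Sum>i\<in>I. \<Sum>s\<in>F. c s * X s i)"
    using top_sum_attained[OF assms(2)] .
  have "(\<Sum>i\<in>I. \<Sum>s\<in>F. c s * X s i) = (\<Sum>s\<in>F. c s * sum (X s) I)"
    by (subst sum.swap) (simp add: sum_distrib_left)
  also have "\<dots> \<le> (\<Sum>s\<in>F. c s * top_sum d (X s) j)"
    using assms(1) sum_le_top_sum[OF I(1)] I(2) by (intro sum_mono mult_left_mono) auto
  finally show ?thesis
    using I(3) by simp
qed

lemma majorizes_iff_top_sum:
  "majorizes d u x \<longleftrightarrow> (\<forall>j<d. top_sum d x j \<le> top_sum d u j) \<and> top_sum d u d = top_sum d x d"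
  by (simp add: majorizes_def top_sum_def decr_def)

lemma weakly_majorizes_iff_top_sum:
  "weakly_majorizes d u x \<longleftrightarrow> (\<forall>j\<le>d. top_sum d x j \<le> top_sum d u j)"
  unfolding weakly_majorizes_def top_sum_def[symmetric]
proof (intro iffI allI impI ballI)
  fix j
  assume "\<forall>j\<in>{1..d}. top_sum d x j \<le> top_sum d u j" "j \<le> d"
  then show "top_sum d x j \<le> top_sum d u j"
    by (cases "j = 0") (auto simp: top_sum_def)
qed auto

lemma nonincreasing_convex_comb:
  assumes "\<forall>s\<in>F. 0 \<le> c s" "\<forall>s\<in>F. nonincreasing d (X s)"
  shows "nonincreasing d (\<lambda>i. \<Sum>s\<in>F. c s * X s i)"
  using assms unfolding nonincreasing_def by (auto intro!: sum_mono mult_left_mono)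

lemma majorizes_convex_comb_sorted:
  assumes c: "\<forall>s\<in>F. 0 \<le> c s"
  shows "majorizes d (\<lambda>i. \<Sum>s\<in>F. c s * X s (sort_perm d (X s) i)) (\<lambda>i. \<Sum>s\<in>F. c s * X s i)"
    (is "majorizes d ?u ?x")
proof -
  have "nonincreasing d ?u"
    using nonincreasing_convex_comb[OF c, of d "\<lambda>s. X s \<circ> sort_perm d (X s)"]
    by (simp add: nonincreasing_sort_perm)
  then have top_u: "top_sum d ?u j = (\<Sum>s\<in>F. c s * top_sum d (X s) j)" if "j \<le> d" for j
    using that by (simp add: top_sum_nonincreasing top_sum_sort_perm sum_distrib_left sum.swap[of _ F])
  have "top_sum d ?x d = (\<Sum>s\<in>F. c s * top_sum d (X s) d)"
    by (simp add: top_sum_full sum_distrib_left sum.swap[of _ F])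
  then show ?thesis
    unfolding majorizes_iff_top_sum using top_u top_sum_convex_comb[OF c] by simp
qed

lemma weakly_majorizes_if_majorizes_dominating:
  assumes u: "majorizes d u y" and xy: "\<forall>i<d. x i \<le> y i"
  shows "weakly_majorizes d u x"
  unfolding weakly_majorizes_iff_top_sum
proof (intro allI impI)
  fix j
  assume j: "j \<le> d"
  have "top_sum d y j \<le> top_sum d u j"
    using u j by (cases "j = d") (auto simp: majorizes_iff_top_sum)
  then show "top_sum d x j \<le> top_sum d u j"
    using top_sum_mono[OF xy j] by linarith
qed

definition perm_closed :: "nat \<Rightarrow> (nat \<Rightarrow> real) set \<Rightarrow> bool" where
  "perm_closed d V \<longleftrightarrow> (\<forall>v\<in>V. \<forall>\<sigma>. \<sigma> permutes {..<d} \<longrightarrow> v \<circ> \<sigma> \<in> V)"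

definition shrink_closed :: "nat \<Rightarrow> (nat \<Rightarrow> real) set \<Rightarrow> bool" where
  "shrink_closed d V \<longleftrightarrow> (\<forall>v\<in>V. \<forall>i<d. \<forall>a. \<bar>a\<bar> \<le> \<bar>v i\<bar> \<longrightarrow> v(i := a) \<in> V)"

lemma vecs_comp_permutes: "p permutes {..<d} \<Longrightarrow> v \<in> vecs d \<Longrightarrow> v \<circ> p \<in> vecs d"
  by (simp add: vecs_def permutes_not_in)

lemma transfer_mem:
  assumes V: "convex V" "perm_closed d V" and v: "v \<in> V"
    and ab: "a < d" "b < d" and \<delta>: "0 \<le> \<delta>" "2 * \<delta> \<le> v a - v b"
  shows "v(a := v a - \<delta>, b := v b + \<delta>) \<in> V"
proof (cases "\<delta> = 0")
  case True
  then show ?thesis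
    using v by simp
next
  case False
  then have "a \<noteq> b" "v b < v a"
    using \<delta> by auto
  define t where "t = \<delta> / (v a - v b)"
  have t: "0 \<le> t" "t \<le> 1" "t * (v a - v b) = \<delta>"
    using \<delta> \<open>v b < v a\<close> by (auto simp: t_def field_simps)
  have "v \<circ> Transposition.transpose a b \<in> V"
    using V(2) v ab by (simp add: perm_closed_def permutes_swap_id)
  moreover have "v(a := v a - \<delta>, b := v b + \<delta>) = (1 - t) *\<^sub>R v + t *\<^sub>R (v \<circ> Transposition.transpose a b)"
    using t(3) \<open>a \<noteq> b\<close> by (auto simp: fun_eq_iff scaleR_fun_def algebra_simps)
  ultimately show ?thesis
    using convexD[OF V(1) v] t by simp
qed

lemma shrink_closed_if_flip_closed:
  assumes V: "convex V" and flip: "\<And>v i. v \<in> V \<Longrightarrow> i < d \<Longrightarrow> v(i := - v i) \<in> V"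
  shows "shrink_closed d V"
  unfolding shrink_closed_def
proof (intro ballI allI impI)
  fix v i a
  assume v: "v \<in> V" and i: "i < d" and a: "\<bar>a\<bar> \<le> \<bar>v i\<bar>"
  show "v(i := a) \<in> V"
  proof (cases "v i = 0")
    case True
    then have "v(i := a) = v"
      using a by auto
    then show ?thesis
      using v by simp
  next
    case False
    define t where "t = (1 - a / v i) / 2"
    have r: "\<bar>a / v i\<bar> \<le> 1"
      using a False by (simp add: abs_divide divide_le_eq_1)
    have t: "0 \<le> t" "t \<le> 1"
      using abs_le_D1[OF r] abs_le_D2[OF r] by (simp_all add: t_def)
    have "v(i := a) = (1 - t) *\<^sub>R v + t *\<^sub>R v(i := - v i)"
      using False by (auto simp: fun_eq_iff scaleR_fun_def t_def field_simps)
    then show ?thesis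
      using convexD[OF V v flip[OF v i]] t by simp
  qed
qed

lemma shrink_mem:
  assumes V: "shrink_closed d V" and v: "v \<in> V" "v \<in> vecs d"
    and y: "y \<in> vecs d" "\<forall>i<d. \<bar>y i\<bar> \<le> \<bar>v i\<bar>"
  shows "y \<in> V"
proof -
  have "(\<lambda>i. if i < j then y i else v i) \<in> V" if "j \<le> d" for j
    using that
  proof (induction j)
    case 0
    then show ?case
      using v by simp
  next
    case (Suc j)
    let ?w = "\<lambda>i. if i < j then y i else v i"
    have "?w(j := y j) \<in> V"
      using V Suc y(2) unfolding shrink_closed_def by simp
    moreover have "?w(j := y j) = (\<lambda>i. if i < Suc j then y i else v i)"
      by (auto simp: fun_eq_iff)
    ultimately show ?case
      by simp
  qed
  moreover have "(\<lambda>i. if i < d then y i else v i) = y"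
    using v(2) y(1) by (auto simp: fun_eq_iff vecs_def)
  ultimately show ?thesis
    by (metis order_refl)
qed

lemma prefix_excess_ge:
  fixes v y :: "nat \<Rightarrow> real"
  assumes agree: "\<forall>i<a. v i = y i" and "\<forall>i\<in>{a<..<j}. y i \<le> v i" "a < j"
  shows "v a - y a \<le> (\<Sum>i<j. v i - y i)"
  using assms(2,3)
proof (induction j)
  case 0
  then show ?case
    by simp
next
  case (Suc j)
  show ?case
  proof (cases "j = a")
    case True
    then show ?thesis
      using agree by simp
  next
    case False
    then have "a < j" "y j \<le> v j"
      using Suc.prems by auto
    then have "v a - y a \<le> (\<Sum>i<j. v i - y i)"
      using Suc by simp
    then show ?thesis
      using \<open>y j \<le> v j\<close> by simp
  qed
qed

lemma transfer_step:
  assumes V: "convex V" "perm_closed d V" and y: "nonincreasing d y"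
    and v: "v \<in> V" "v \<in> vecs d" and prefix: "\<forall>j\<le>d. (\<Sum>i<j. y i) \<le> (\<Sum>i<j. v i)"
    and ab: "a < b" "b < d" and agree: "\<forall>i<a. v i = y i"
    and excess: "y a < v a" and deficit: "v b < y b" and between: "\<forall>i\<in>{a<..<b}. y i \<le> v i"
  obtains v' where "v' \<in> V" "v' \<in> vecs d" "\<forall>j\<le>d. (\<Sum>i<j. y i) \<le> (\<Sum>i<j. v' i)"
    "(\<Sum>i<d. v' i) = (\<Sum>i<d. v i)" "{i. v' i \<noteq> y i} \<subset> {i. v i \<noteq> y i}"
proof
  \<comment> \<open>The largest transfer that keeps a in excess and b in deficit; it settles a or b.\<close>
  define \<delta> where "\<delta> = min (v a - y a) (y b - v b)"
  define v' where "v' = v(a := v a - \<delta>, b := v b + \<delta>)"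
  have "y b \<le> y a"
    using y ab by (simp add: nonincreasing_def)
  show "v' \<in> V"
    unfolding v'_def
    by (rule transfer_mem[OF V v(1)]) (use ab excess deficit \<open>y b \<le> y a\<close> in \<open>auto simp: \<delta>_def min_def\<close>)
  show "v' \<in> vecs d"
    using v(2) ab by (simp add: v'_def vecs_def)
  have "v' = (\<lambda>i. v i - (if i = a then \<delta> else 0) + (if i = b then \<delta> else 0))"
    using ab by (auto simp: v'_def)
  then have sums: "(\<Sum>i<j. v' i) = (\<Sum>i<j. v i) - (if a < j then \<delta> else 0) + (if b < j then \<delta> else 0)" for j
    by (simp add: sum.distrib sum_subtractf)
  show "(\<Sum>i<d. v' i) = (\<Sum>i<d. v i)"
    using sums[of d] ab by simp
  show "\<forall>j\<le>d. (\<Sum>i<j. y i) \<le> (\<Sum>i<j. v' i)"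
  proof (intro allI impI)
    fix j
    assume "j \<le> d"
    show "(\<Sum>i<j. y i) \<le> (\<Sum>i<j. v' i)"
    proof (cases "a < j \<and> j \<le> b")
      case True
      have "v a - y a \<le> (\<Sum>i<j. v i - y i)"
        by (rule prefix_excess_ge) (use agree between True in auto)
      then show ?thesis
        using True sums[of j] by (simp add: sum_subtractf \<delta>_def)
    next
      case False
      then show ?thesis
        using sums[of j] prefix \<open>j \<le> d\<close> ab by auto
    qed
  qed
  show "{i. v' i \<noteq> y i} \<subset> {i. v i \<noteq> y i}"
  proof
    show "{i. v' i \<noteq> y i} \<subseteq> {i. v i \<noteq> y i}"
      using excess deficit by (auto simp: v'_def)
    have "v' a = y a \<or> v' b = y b"
      using ab by (auto simp: v'_def \<delta>_def min_def)
    moreover have "a \<in> {i. v i \<noteq> y i}" "b \<in> {i. v i \<noteq> y i}"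
      using excess deficit by auto
    ultimately show "{i. v' i \<noteq> y i} \<noteq> {i. v i \<noteq> y i}"
      by blast
  qed
qed

lemma shrink_step:
  assumes V: "shrink_closed d V" and v: "v \<in> V" "v \<in> vecs d"
    and prefix: "\<forall>j\<le>d. (\<Sum>i<j. y i) \<le> (\<Sum>i<j. v i)"
    and a: "a < d" and agree: "\<forall>i<a. v i = y i"
    and excess: "0 \<le> y a" "y a < v a" and above: "\<forall>i\<in>{a<..<d}. y i \<le> v i"
  obtains v' where "v' \<in> V" "v' \<in> vecs d" "\<forall>j\<le>d. (\<Sum>i<j. y i) \<le> (\<Sum>i<j. v' i)"
    "{i. v' i \<noteq> y i} \<subset> {i. v i \<noteq> y i}"
proof
  define v' where "v' = v(a := y a)"
  show "v' \<in> V"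
    using V v(1) a excess unfolding shrink_closed_def v'_def by simp
  show "v' \<in> vecs d"
    using v(2) a by (simp add: v'_def vecs_def)
  have "v' = (\<lambda>i. v i - (if i = a then v a - y a else 0))"
    by (auto simp: v'_def)
  then have sums: "(\<Sum>i<j. v' i) = (\<Sum>i<j. v i) - (if a < j then v a - y a else 0)" for j
    by (simp add: sum_subtractf)
  show "\<forall>j\<le>d. (\<Sum>i<j. y i) \<le> (\<Sum>i<j. v' i)"
  proof (intro allI impI)
    fix j
    assume "j \<le> d"
    show "(\<Sum>i<j. y i) \<le> (\<Sum>i<j. v' i)"
    proof (cases "a < j")
      case True
      have "v a - y a \<le> (\<Sum>i<j. v i - y i)"
        by (rule prefix_excess_ge) (use agree above True \<open>j \<le> d\<close> in auto)
      then show ?thesis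
        using True sums[of j] by (simp add: sum_subtractf)
    next
      case False
      then show ?thesis
        using sums[of j] prefix \<open>j \<le> d\<close> by auto
    qed
  qed
  have "{i. v' i \<noteq> y i} = {i. v i \<noteq> y i} - {a}"
    by (auto simp: v'_def)
  moreover have "a \<in> {i. v i \<noteq> y i}"
    using excess by simp
  ultimately show "{i. v' i \<noteq> y i} \<subset> {i. v i \<noteq> y i}"
    by blast
qed

lemma first_excess:
  assumes "v \<in> vecs d" "y \<in> vecs d" "v \<noteq> y" "\<forall>j\<le>d. (\<Sum>i<j. y i) \<le> (\<Sum>i<j. v i)"
  obtains a where "a < d" "\<forall>i<a. v i = y i" "y a < v a"
proof -
  obtain a where a: "v a \<noteq> y a" "\<forall>i<a. v i = y i"
    using assms(3) exists_least_iff[of "\<lambda>i. v i \<noteq> y i"] by (auto simp: fun_eq_iff)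
  have "a < d"
    using a(1) assms(1,2) by (simp add: vecs_def) (metis leI)
  have "(\<Sum>i<Suc a. y i) \<le> (\<Sum>i<Suc a. v i)"
    using assms(4) \<open>a < d\<close> Suc_leI by blast
  then have "y a < v a"
    using a by simp
  with \<open>a < d\<close> a(2) show thesis
    by (rule that)
qed

text \<open>The second alternative of the last premise covers weak majorization: the surplus of
  the total sum is then removed by shrinking coordinates.\<close>

lemma prefix_dominated_step:
  assumes V: "convex V" "perm_closed d V" and y: "nonincreasing d y" "y \<in> vecs d"
    and v: "v \<in> V" "v \<in> vecs d" and prefix: "\<forall>j\<le>d. (\<Sum>i<j. y i) \<le> (\<Sum>i<j. v i)"
    and total: "(\<Sum>i<d. y i) = (\<Sum>i<d. v i) \<or> (\<forall>i<d. 0 \<le> y i) \<and> shrink_closed d V"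
    and "v \<noteq> y"
  obtains v' where "v' \<in> V" "v' \<in> vecs d" "\<forall>j\<le>d. (\<Sum>i<j. y i) \<le> (\<Sum>i<j. v' i)"
    "(\<Sum>i<d. y i) = (\<Sum>i<d. v' i) \<or> (\<forall>i<d. 0 \<le> y i) \<and> shrink_closed d V"
    "{i. v' i \<noteq> y i} \<subset> {i. v i \<noteq> y i}"
proof -
  obtain a where a: "a < d" and agree: "\<forall>i<a. v i = y i" and excess: "y a < v a"
    using first_excess[OF v(2) y(2) \<open>v \<noteq> y\<close> prefix] .
  show thesis
  proof (cases "\<exists>b. a < b \<and> b < d \<and> v b < y b")
    case True
    then obtain b where b: "a < b" "b < d" "v b < y b"
      and least: "\<forall>i<b. \<not> (a < i \<and> i < d \<and> v i < y i)"
      unfolding exists_least_iff[of "\<lambda>b. a < b \<and> b < d \<and> v b < y b"] by blast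
    have "\<forall>i\<in>{a<..<b}. y i \<le> v i"
      using least b(2) by force
    then obtain v' where v': "v' \<in> V" "v' \<in> vecs d" "\<forall>j\<le>d. (\<Sum>i<j. y i) \<le> (\<Sum>i<j. v' i)"
      "(\<Sum>i<d. v' i) = (\<Sum>i<d. v i)" "{i. v' i \<noteq> y i} \<subset> {i. v i \<noteq> y i}"
      using transfer_step[OF V y(1) v prefix b(1,2) agree excess b(3)] by blast
    show thesis
      by (rule that[OF v'(1-3) _ v'(5)]) (use total v'(4) in simp)
  next
    case False
    then have above: "\<forall>i\<in>{a<..<d}. y i \<le> v i"
      by auto
    have "v a - y a \<le> (\<Sum>i<d. v i - y i)"
      using prefix_excess_ge[OF agree above a] .
    then have "(\<Sum>i<d. y i) \<noteq> (\<Sum>i<d. v i)"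
      using excess by (simp add: sum_subtractf)
    then have nonneg: "\<forall>i<d. 0 \<le> y i" and shrink: "shrink_closed d V"
      using total by auto
    obtain v' where v': "v' \<in> V" "v' \<in> vecs d" "\<forall>j\<le>d. (\<Sum>i<j. y i) \<le> (\<Sum>i<j. v' i)"
      "{i. v' i \<noteq> y i} \<subset> {i. v i \<noteq> y i}"
      using shrink_step[OF shrink v prefix a agree _ excess above] nonneg a by blast
    show thesis
      by (rule that[OF v'(1-3) _ v'(4)]) (use nonneg shrink in simp)
  qed
qed

lemma prefix_dominated_mem:
  assumes V: "convex V" "perm_closed d V" and y: "nonincreasing d y" "y \<in> vecs d"
  shows "v \<in> V \<Longrightarrow> v \<in> vecs d \<Longrightarrow> \<forall>j\<le>d. (\<Sum>i<j. y i) \<le> (\<Sum>i<j. v i) \<Longrightarrow>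
    (\<Sum>i<d. y i) = (\<Sum>i<d. v i) \<or> (\<forall>i<d. 0 \<le> y i) \<and> shrink_closed d V \<Longrightarrow> y \<in> V"
proof (induction "card {i. v i \<noteq> y i}" arbitrary: v rule: less_induct)
  case less
  show "y \<in> V"
  proof (cases "v = y")
    case True
    then show ?thesis
      using less.prems(1) by simp
  next
    case False
    obtain v' where v': "v' \<in> V" "v' \<in> vecs d" "\<forall>j\<le>d. (\<Sum>i<j. y i) \<le> (\<Sum>i<j. v' i)"
      "(\<Sum>i<d. y i) = (\<Sum>i<d. v' i) \<or> (\<forall>i<d. 0 \<le> y i) \<and> shrink_closed d V"
      "{i. v' i \<noteq> y i} \<subset> {i. v i \<noteq> y i}"
      using prefix_dominated_step[OF V y less.prems False] .
    have "{i. v i \<noteq> y i} \<subseteq> {..<d}"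
      using less.prems(2) y(2) by (auto simp: vecs_def) (metis leI)
    then have "card {i. v' i \<noteq> y i} < card {i. v i \<noteq> y i}"
      using psubset_card_mono[OF _ v'(5)] finite_subset by blast
    then show ?thesis
      using less.hyps v'(1-4) by blast
  qed
qed

lemma top_sum_dominated_mem:
  assumes V: "convex V" "perm_closed d V" and v: "v \<in> V" "v \<in> vecs d" and x: "x \<in> vecs d"
    and dom: "\<forall>j\<le>d. top_sum d x j \<le> top_sum d v j"
    and total: "top_sum d x d = top_sum d v d \<or> (\<forall>i<d. 0 \<le> x i) \<and> shrink_closed d V"
  shows "x \<in> V"
proof -
  define p where "p = sort_perm d v"
  define q where "q = sort_perm d x"
  have p: "p permutes {..<d}" and q: "q permutes {..<d}" "inv q permutes {..<d}"
    by (simp_all add: p_def q_def sort_perm_permutes permutes_inv)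
  have top_sums: "top_sum d v j = (\<Sum>i<j. (v \<circ> p) i)" "top_sum d x j = (\<Sum>i<j. (x \<circ> q) i)"
    if "j \<le> d" for j
    using top_sum_sort_perm[OF that] by (simp_all add: p_def q_def)
  have y: "nonincreasing d (x \<circ> q)" "x \<circ> q \<in> vecs d"
    using nonincreasing_sort_perm vecs_comp_permutes[OF q(1) x] by (simp_all add: q_def)
  have vp: "v \<circ> p \<in> V" "v \<circ> p \<in> vecs d"
    using V(2) v p vecs_comp_permutes[OF p v(2)] by (simp_all add: perm_closed_def)
  have prefix: "\<forall>j\<le>d. (\<Sum>i<j. (x \<circ> q) i) \<le> (\<Sum>i<j. (v \<circ> p) i)"
    using dom top_sums by simp
  have "(\<forall>i<d. 0 \<le> x i) \<Longrightarrow> \<forall>i<d. 0 \<le> (x \<circ> q) i"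
    using permutes_in_image[OF q(1)] by simp
  then have "(\<Sum>i<d. (x \<circ> q) i) = (\<Sum>i<d. (v \<circ> p) i) \<or>
      (\<forall>i<d. 0 \<le> (x \<circ> q) i) \<and> shrink_closed d V"
    using total top_sums[of d] by auto
  then have "x \<circ> q \<in> V"
    by (rule prefix_dominated_mem[OF V y vp prefix])
  then have "x \<circ> q \<circ> inv q \<in> V"
    using V(2) q(2) by (simp add: perm_closed_def)
  then show ?thesis
    by (simp add: comp_assoc permutes_inv_o(1)[OF q(1)])
qed

lemma majorized_mem:
  assumes "convex V" "perm_closed d V" "u \<in> V" "u \<in> vecs d" "x \<in> vecs d" "majorizes d u x"
  shows "x \<in> V"
proof (rule top_sum_dominated_mem[OF assms(1-5)])
  show "\<forall>j\<le>d. top_sum d x j \<le> top_sum d u j"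
    using assms(6) by (auto simp: majorizes_iff_top_sum le_less)
qed (use assms(6) in \<open>simp add: majorizes_iff_top_sum\<close>)

lemma abs_weakly_majorized_mem:
  assumes V: "convex V" "perm_closed d V" "shrink_closed d V"
    and u: "u \<in> V" "u \<in> vecs d" and x: "x \<in> vecs d" and wm: "weakly_majorizes d u (\<lambda>i. \<bar>x i\<bar>)"
  shows "x \<in> V"
proof -
  have "(\<lambda>i. \<bar>x i\<bar>) \<in> vecs d"
    using x by (simp add: vecs_def)
  moreover have "(\<lambda>i. \<bar>x i\<bar>) \<in> V"
    by (rule top_sum_dominated_mem[OF V(1,2) u])
      (use x wm V(3) in \<open>auto simp: vecs_def weakly_majorizes_iff_top_sum\<close>)
  ultimately show ?thesis
    using shrink_mem[OF V(3) _ _ x] by simp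
qed

definition block_slice :: "(('k \<Rightarrow> 'a) \<times> 'b) set \<Rightarrow> ('k \<Rightarrow> 'a) \<Rightarrow> 'b \<Rightarrow> 'k \<Rightarrow> 'a set" where
  "block_slice T w z k = {v. (w(k := v), z) \<in> T}"

lemma convex_block_slice:
  fixes T :: "(('k \<Rightarrow> 'a::real_vector) \<times> 'b::real_vector) set"
  assumes "convex T"
  shows "convex (block_slice T w z k)"
  unfolding convex_def block_slice_def
proof (intro ballI allI impI, clarsimp)
  fix v1 v2 :: 'a and s t :: real
  assume v: "(w(k := v1), z) \<in> T" "(w(k := v2), z) \<in> T" and st: "0 \<le> s" "0 \<le> t" "s + t = 1"
  have "(w(k := s *\<^sub>R v1 + t *\<^sub>R v2), z) = s *\<^sub>R (w(k := v1), z) + t *\<^sub>R (w(k := v2), z)"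
    using st(3) by (auto simp: fun_eq_iff scaleR_fun_def simp flip: scaleR_add_left)
  then show "(w(k := s *\<^sub>R v1 + t *\<^sub>R v2), z) \<in> T"
    using convexD[OF assms v st] by simp
qed

lemma blockwise_mem:
  fixes x u :: "nat \<Rightarrow> 'a"
  assumes u: "(u, z) \<in> T" and "\<forall>k\<ge>m. x k = u k"
    and step: "\<And>k w. k < m \<Longrightarrow> u k \<in> block_slice T w z k \<Longrightarrow> x k \<in> block_slice T w z k"
  shows "(x, z) \<in> T"
proof -
  have "((\<lambda>k. if k < j then x k else u k), z) \<in> T" if "j \<le> m" for j
    using that
  proof (induction j)
    case 0
    then show ?case
      using u by simp
  next
    case (Suc j)
    let ?w = "\<lambda>k. if k < j then x k else u k"
    have "u j \<in> block_slice T ?w z j"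
      using Suc by (simp add: block_slice_def fun_upd_idem)
    then have "(?w(j := x j), z) \<in> T"
      using step Suc.prems by (simp add: block_slice_def)
    moreover have "?w(j := x j) = (\<lambda>k. if k < Suc j then x k else u k)"
      by (auto simp: fun_eq_iff)
    ultimately show ?case
      by simp
  qed
  moreover have "(\<lambda>k. if k < m then x k else u k) = x"
    using assms(2) by (auto simp: fun_eq_iff)
  ultimately show ?thesis
    by (metis order_refl)
qed

lemma block_slice_convex_hull_linear:
  fixes S :: "(('k \<Rightarrow> 'a::real_vector) \<times> 'b::real_vector) set" and L :: "'a \<Rightarrow> 'a"
  assumes L: "linear L" and S: "\<And>x z. (x, z) \<in> S \<Longrightarrow> (x(k := L (x k)), z) \<in> S"
    and v: "v \<in> block_slice (convex hull S) w z k"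
  shows "L v \<in> block_slice (convex hull S) w z k"
proof -
  define f :: "('k \<Rightarrow> 'a) \<times> 'b \<Rightarrow> ('k \<Rightarrow> 'a) \<times> 'b" where "f q = ((fst q)(k := L (fst q k)), snd q)" for q
  have "linear f"
    by (rule linearI) (auto simp: f_def fun_eq_iff scaleR_fun_def linear_add[OF L] linear_scale[OF L])
  have "f ` S \<subseteq> S"
    using S by (auto simp: f_def)
  then have "f ` (convex hull S) \<subseteq> convex hull S"
    by (simp add: convex_hull_linear_image[OF \<open>linear f\<close>] hull_mono)
  then show ?thesis
    using v by (force simp: block_slice_def f_def)
qed

lemma block_slice_vecs:
  assumes "S \<subseteq> space m n p" "k < m" "v \<in> block_slice S w z k"
  shows "v \<in> vecs (n k)"
  using assms by (force simp: block_slice_def space_def)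

lemma perm_closed_block_slice:
  assumes "perm_invariant S n k"
  shows "perm_closed (n k) (block_slice S w z k)"
  using assms unfolding perm_invariant_def perm_closed_def block_slice_def
  by (metis fun_upd_same fun_upd_upd mem_Collect_eq)

lemma perm_closed_block_slice_hull:
  assumes "perm_invariant S n k"
  shows "perm_closed (n k) (block_slice (convex hull S) w z k)"
  unfolding perm_closed_def
proof (intro ballI allI impI)
  fix v \<sigma>
  assume "v \<in> block_slice (convex hull S) w z k" "\<sigma> permutes {..<n k}"
  moreover have "linear (\<lambda>v :: nat \<Rightarrow> real. v \<circ> \<sigma>)"
    by (rule linearI) (simp_all add: fun_eq_iff scaleR_fun_def)
  ultimately show "v \<circ> \<sigma> \<in> block_slice (convex hull S) w z k"
    using assms block_slice_convex_hull_linear[of "\<lambda>v. v \<circ> \<sigma>" S k]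
    unfolding perm_invariant_def by simp
qed

lemma abs_mem_block_slice:
  assumes "sign_invariant S n k" "S \<subseteq> space m n p" "k < m" "v \<in> block_slice S w z k"
  shows "(\<lambda>i. \<bar>v i\<bar>) \<in> block_slice S w z k"
proof -
  have "(\<lambda>i. \<bar>v i\<bar>) \<in> vecs (n k)"
    using block_slice_vecs[OF assms(2-4)] by (simp add: vecs_def)
  then show ?thesis
    using assms(1,4) unfolding sign_invariant_def block_slice_def
    by (metis (no_types, lifting) abs_abs fun_upd_same fun_upd_upd mem_Collect_eq)
qed

lemma shrink_closed_block_slice_hull:
  assumes "sign_invariant S n k" "S \<subseteq> space m n p" "k < m"
  shows "shrink_closed (n k) (block_slice (convex hull S) w z k)"
proof (rule shrink_closed_if_flip_closed[OF convex_block_slice[OF convex_convex_hull]])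
  fix v i
  assume "v \<in> block_slice (convex hull S) w z k" "i < n k"
  moreover have "linear (\<lambda>v :: nat \<Rightarrow> real. v(i := - v i))"
    by (rule linearI) (simp_all add: fun_eq_iff scaleR_fun_def)
  moreover have "(x(k := (x k)(i := - x k i)), z') \<in> S" if "(x, z') \<in> S" for x z'
  proof -
    have "x k \<in> vecs (n k)"
      using that assms(2,3) by (auto simp: space_def)
    then have "(x k)(i := - x k i) \<in> vecs (n k)"
      using \<open>i < n k\<close> by (simp add: vecs_def)
    then show ?thesis
      using assms(1) that unfolding sign_invariant_def by simp
  qed
  ultimately show "v(i := - v i) \<in> block_slice (convex hull S) w z k"
    using block_slice_convex_hull_linear[of "\<lambda>v. v(i := - v i)" S k] by simp
qed

lemma convex_space: "convex (space m n p)"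
  unfolding convex_def space_def vecs_def
  by (auto simp: scaleR_fun_def)

lemma sum_fun_apply: "(\<Sum>s\<in>F. f s) x = (\<Sum>s\<in>F. f s x)"
  by (induction F rule: infinite_finite_induct) auto

lemma convex_hull_subset_blockwise:
  fixes h :: "nat \<Rightarrow> (nat \<Rightarrow> real) \<Rightarrow> nat \<Rightarrow> real"
    and rel :: "nat \<Rightarrow> (nat \<Rightarrow> real) \<Rightarrow> (nat \<Rightarrow> real) \<Rightarrow> bool"
  assumes S: "S \<subseteq> space m n p"
    and h: "\<And>x z. (x, z) \<in> S \<Longrightarrow> ((\<lambda>k. if k < m then h k (x k) else x k), z) \<in> S \<inter> Q"
    and rel: "\<And>k (F :: ((nat \<Rightarrow> nat \<Rightarrow> real) \<times> (nat \<Rightarrow> real)) set) c X. k < m \<Longrightarrow> \<forall>s\<in>F. 0 \<le> c s \<Longrightarrow>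
      rel k (\<lambda>i. \<Sum>s\<in>F. c s * h k (X s) i) (\<lambda>i. \<Sum>s\<in>F. c s * X s i)"
  shows "convex hull S \<subseteq> {(x, z) \<in> space m n p. \<exists>u. (u, z) \<in> space m n p \<and>
    (u, z) \<in> convex hull (S \<inter> Q) \<and> (\<forall>k<m. rel k (u k) (x k))}"
proof clarify
  fix x z
  assume "(x, z) \<in> convex hull S"
  then obtain F c where F: "finite F" "F \<subseteq> S" "\<forall>s\<in>F. 0 \<le> c s" "sum c F = 1"
    and xz: "(\<Sum>s\<in>F. c s *\<^sub>R s) = (x, z)"
    unfolding convex_hull_explicit by blast
  define g :: "(nat \<Rightarrow> nat \<Rightarrow> real) \<times> (nat \<Rightarrow> real) \<Rightarrow> (nat \<Rightarrow> nat \<Rightarrow> real) \<times> (nat \<Rightarrow> real)"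
    where "g s = ((\<lambda>k. if k < m then h k (fst s k) else fst s k), snd s)" for s
  define u where "u = fst (\<Sum>s\<in>F. c s *\<^sub>R g s)"
  have hull_space: "convex hull S \<subseteq> space m n p"
    using S convex_space by (rule hull_minimal)
  have "g s \<in> S \<inter> Q" if "s \<in> F" for s
    using h[of "fst s" "snd s"] F(2) that by (auto simp: g_def)
  then have in_hull: "(\<Sum>s\<in>F. c s *\<^sub>R g s) \<in> convex hull (S \<inter> Q)"
    using F by (intro convex_sum[OF F(1) convex_convex_hull]) (auto intro: hull_inc)
  have "snd (\<Sum>s\<in>F. c s *\<^sub>R g s) = z"
    using arg_cong[OF xz, of snd] by (simp add: snd_sum g_def)
  then have "(\<Sum>s\<in>F. c s *\<^sub>R g s) = (u, z)"
    by (simp add: u_def prod_eq_iff)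
  with in_hull have u: "(u, z) \<in> convex hull (S \<inter> Q)"
    by simp
  moreover have "(x, z) \<in> space m n p" "(u, z) \<in> space m n p"
    using hull_space \<open>(x, z) \<in> convex hull S\<close> u hull_mono[of "S \<inter> Q" S] by auto
  moreover have "rel k (u k) (x k)" if "k < m" for k
  proof -
    have "x k = (\<lambda>i. \<Sum>s\<in>F. c s * fst s k i)" "u k = (\<lambda>i. \<Sum>s\<in>F. c s * h k (fst s k) i)"
      using arg_cong[OF xz, of fst] that
      by (auto simp: u_def g_def fst_sum sum_fun_apply scaleR_fun_def)
    then show ?thesis
      using rel[OF that F(3)] by simp
  qed
  ultimately show "(x, z) \<in> space m n p \<and> (\<exists>u. (u, z) \<in> space m n p \<and>
    (u, z) \<in> convex hull (S \<inter> Q) \<and> (\<forall>k<m. rel k (u k) (x k)))"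
    by blast
qed

lemma convex_hull_superset_blockwise:
  assumes step: "\<And>k w z u x. k < m \<Longrightarrow> u \<in> vecs (n k) \<Longrightarrow> x \<in> vecs (n k) \<Longrightarrow> rel k u x \<Longrightarrow>
      u \<in> block_slice (convex hull S) w z k \<Longrightarrow> x \<in> block_slice (convex hull S) w z k"
  shows "{(x, z) \<in> space m n p. \<exists>u. (u, z) \<in> space m n p \<and>
    (u, z) \<in> convex hull (S \<inter> Q) \<and> (\<forall>k<m. rel k (u k) (x k))} \<subseteq> convex hull S"
proof clarify
  fix x z u
  assume x: "(x, z) \<in> space m n p" and u: "(u, z) \<in> space m n p"
    and "(u, z) \<in> convex hull (S \<inter> Q)" and rel: "\<forall>k<m. rel k (u k) (x k)"
  then have "(u, z) \<in> convex hull S"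
    using hull_mono[of "S \<inter> Q" S] by blast
  then show "(x, z) \<in> convex hull S"
  proof (rule blockwise_mem)
    show "\<forall>k\<ge>m. x k = u k"
      using x u by (simp add: space_def)
    show "x k \<in> block_slice (convex hull S) w z k"
      if "k < m" "u k \<in> block_slice (convex hull S) w z k" for k w
      using step[OF that(1) _ _ _ that(2)] x u rel that(1) by (simp add: space_def)
  qed
qed

lemma abs_convex_comb_le:
  fixes c :: "'a \<Rightarrow> real"
  assumes "\<forall>s\<in>F. 0 \<le> c s"
  shows "\<bar>\<Sum>s\<in>F. c s * X s\<bar> \<le> (\<Sum>s\<in>F. c s * \<bar>X s\<bar>)"
  using sum_abs[of "\<lambda>s. c s * X s" F] assms by (simp add: abs_mult)

lemma convex_hull_perm_invariant:
  assumes S: "S \<subseteq> space m n p" and perm: "\<forall>k<m. perm_invariant S n k"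
  shows "convex hull S =
    {(x, z) \<in> space m n p. \<exists>u. (u, z) \<in> space m n p \<and>
       (u, z) \<in> convex hull (S \<inter> {(v, w). \<forall>k<m. nonincreasing (n k) (v k)}) \<and>
       (\<forall>k<m. majorizes (n k) (u k) (x k))}" (is "_ = ?R")
proof
  show "convex hull S \<subseteq> ?R"
  proof (rule convex_hull_subset_blockwise[where h = "\<lambda>k v. v \<circ> sort_perm (n k) v"
        and rel = "\<lambda>k. majorizes (n k)", OF S])
    fix x z
    assume "(x, z) \<in> S"
    then have "((\<lambda>k. if k < m then x k \<circ> sort_perm (n k) (x k) else x k), z) \<in> S"
      by (rule blockwise_mem[where m = m])
        (use perm perm_closed_block_slice in \<open>auto simp: perm_closed_def sort_perm_permutes\<close>)
    then show "((\<lambda>k. if k < m then x k \<circ> sort_perm (n k) (x k) else x k), z)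
        \<in> S \<inter> {(v, w). \<forall>k<m. nonincreasing (n k) (v k)}"
      by (simp add: nonincreasing_sort_perm)
  qed (simp add: majorizes_convex_comb_sorted)
  show "?R \<subseteq> convex hull S"
    by (rule convex_hull_superset_blockwise)
      (use perm in \<open>auto intro: majorized_mem[OF convex_block_slice[OF convex_convex_hull]
        perm_closed_block_slice_hull]\<close>)
qed

lemma convex_hull_sign_invariant:
  assumes S: "S \<subseteq> space m n p" and sign: "\<forall>k<m. sign_invariant S n k"
  shows "convex hull S =
    {(x, z) \<in> space m n p. \<exists>u. (u, z) \<in> space m n p \<and>
       (u, z) \<in> convex hull (S \<inter> {(v, w). \<forall>k<m. \<forall>i<n k. v k i \<ge> 0}) \<and>
       (\<forall>k<m. \<forall>i<n k. u k i \<ge> \<bar>x k i\<bar>)}" (is "_ = ?R")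
proof
  show "convex hull S \<subseteq> ?R"
  proof (rule convex_hull_subset_blockwise[where h = "\<lambda>k v i. \<bar>v i\<bar>"
        and rel = "\<lambda>k u x. \<forall>i<n k. u i \<ge> \<bar>x i\<bar>", OF S])
    fix x z
    assume "(x, z) \<in> S"
    then have "((\<lambda>k. if k < m then (\<lambda>i. \<bar>x k i\<bar>) else x k), z) \<in> S"
      by (rule blockwise_mem[where m = m]) (use sign abs_mem_block_slice[OF _ S] in auto)
    then show "((\<lambda>k. if k < m then (\<lambda>i. \<bar>x k i\<bar>) else x k), z)
        \<in> S \<inter> {(v, w). \<forall>k<m. \<forall>i<n k. v k i \<ge> 0}"
      by simp
  qed (intro allI impI abs_convex_comb_le)
  show "?R \<subseteq> convex hull S"
  proof (rule convex_hull_superset_blockwise)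
    fix k w z u x
    assume k: "k < m" and "u \<in> vecs (n k)" "x \<in> vecs (n k)" and le: "\<forall>i<n k. \<bar>x i\<bar> \<le> u i"
      and "u \<in> block_slice (convex hull S) w z k"
    moreover have "\<forall>i<n k. \<bar>x i\<bar> \<le> \<bar>u i\<bar>"
      using le by force
    ultimately show "x \<in> block_slice (convex hull S) w z k"
      using shrink_mem[OF shrink_closed_block_slice_hull[OF _ S k]] sign by blast
  qed
qed

lemma convex_hull_perm_sign_invariant:
  assumes S: "S \<subseteq> space m n p"
    and inv: "\<forall>k<m. perm_invariant S n k \<and> sign_invariant S n k"
  shows "convex hull S =
    {(x, z) \<in> space m n p. \<exists>u. (u, z) \<in> space m n p \<and>
       (u, z) \<in> convex hull (S \<inter> {(v, w). \<forall>k<m. nonincreasing (n k) (v k) \<and> (\<forall>i<n k. v k i \<ge> 0)}) \<and>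
       (\<forall>k<m. weakly_majorizes (n k) (u k) (\<lambda>i. \<bar>x k i\<bar>))}" (is "_ = ?R")
proof
  show "convex hull S \<subseteq> ?R"
  proof (rule convex_hull_subset_blockwise[where h = "\<lambda>k v. (\<lambda>i. \<bar>v i\<bar>) \<circ> sort_perm (n k) (\<lambda>i. \<bar>v i\<bar>)"
        and rel = "\<lambda>k u x. weakly_majorizes (n k) u (\<lambda>i. \<bar>x i\<bar>)", OF S])
    fix x z
    assume "(x, z) \<in> S"
    then have "((\<lambda>k. if k < m then (\<lambda>i. \<bar>x k i\<bar>) \<circ> sort_perm (n k) (\<lambda>i. \<bar>x k i\<bar>) else x k), z) \<in> S"
      by (rule blockwise_mem[where m = m])
        (use inv abs_mem_block_slice[OF _ S] perm_closed_block_slice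
          in \<open>auto simp: perm_closed_def sort_perm_permutes\<close>)
    then show "((\<lambda>k. if k < m then (\<lambda>i. \<bar>x k i\<bar>) \<circ> sort_perm (n k) (\<lambda>i. \<bar>x k i\<bar>) else x k), z)
        \<in> S \<inter> {(v, w). \<forall>k<m. nonincreasing (n k) (v k) \<and> (\<forall>i<n k. v k i \<ge> 0)}"
      by (simp add: nonincreasing_sort_perm)
  next
    fix k and c :: "_ \<Rightarrow> real" and F :: "((nat \<Rightarrow> nat \<Rightarrow> real) \<times> (nat \<Rightarrow> real)) set" and X
    assume c: "\<forall>s\<in>F. 0 \<le> c s"
    show "weakly_majorizes (n k)
        (\<lambda>i. \<Sum>s\<in>F. c s * ((\<lambda>i. \<bar>X s i\<bar>) \<circ> sort_perm (n k) (\<lambda>i. \<bar>X s i\<bar>)) i)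
        (\<lambda>i. \<bar>\<Sum>s\<in>F. c s * X s i\<bar>)"
      using weakly_majorizes_if_majorizes_dominating[OF
          majorizes_convex_comb_sorted[OF c, of "n k" "\<lambda>s i. \<bar>X s i\<bar>"]]
        abs_convex_comb_le[OF c]
      by simp
  qed
  show "?R \<subseteq> convex hull S"
    by (rule convex_hull_superset_blockwise)
      (use inv in \<open>auto intro: abs_weakly_majorized_mem[OF convex_block_slice[OF convex_convex_hull]
        perm_closed_block_slice_hull shrink_closed_block_slice_hull[OF _ S]]\<close>)
qed

theorem theorem4:
  fixes m p :: nat and n :: "nat \<Rightarrow> nat"
    and S :: "((nat \<Rightarrow> nat \<Rightarrow> real) \<times> (nat \<Rightarrow> real)) set"
  assumes "S \<subseteq> space m n p"
  shows
   "((\<forall>k<m. perm_invariant S n k) \<longrightarrow>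
      convex hull S =
        {(x, z) \<in> space m n p. \<exists>u. (u, z) \<in> space m n p \<and>
           (u, z) \<in> convex hull (S \<inter> {(v, w). \<forall>k<m. nonincreasing (n k) (v k)}) \<and>
           (\<forall>k<m. majorizes (n k) (u k) (x k))}) \<and>
    ((\<forall>k<m. sign_invariant S n k) \<longrightarrow>
      convex hull S =
        {(x, z) \<in> space m n p. \<exists>u. (u, z) \<in> space m n p \<and>
           (u, z) \<in> convex hull (S \<inter> {(v, w). \<forall>k<m. \<forall>i<n k. v k i \<ge> 0}) \<and>
           (\<forall>k<m. \<forall>i<n k. u k i \<ge> \<bar>x k i\<bar>)}) \<and>
    ((\<forall>k<m. perm_invariant S n k \<and> sign_invariant S n k) \<longrightarrow>
      convex hull S =
        {(x, z) \<in> space m n p. \<exists>u. (u, z) \<in> space m n p \<and>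
           (u, z) \<in> convex hull (S \<inter> {(v, w). \<forall>k<m. nonincreasing (n k) (v k) \<and> (\<forall>i<n k. v k i \<ge> 0)}) \<and>
           (\<forall>k<m. weakly_majorizes (n k) (u k) (\<lambda>i. \<bar>x k i\<bar>))})"
  using convex_hull_perm_invariant[OF assms] convex_hull_sign_invariant[OF assms]
    convex_hull_perm_sign_invariant[OF assms]
  by blast

end
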